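(* Let $G$ be a graph and $w$ a vertex of $G$ adjacent to two leaves $v_1$ and $v_2$. Then $$\phi(G)\le \sum_{u\in N(w)\setminus\{v_1\}}\phi\big(G-(N[w]\cup N[u])\big)+\phi(G-\{w,v_1,v_2\})+\phi(G-N[w]).$$
   Context: Graphs are finite and simple; a leaf is a vertex of degree $1$. $N(v)$ is the neighborhood of $v$, $N[v]=N(v)\cup\{v\}$, and $G-S$ is the subgraph induced by $V(G)\setminus S$. A subset $F$ of vertices is a dissociation set if $G[F]$ has maximum degree at most $1$; a maximal dissociation set is one not properly contained in another dissociation set; $\phi(G)$ is the number of maximal dissociation sets of $G$, with $\phi=1$ for the graph with no vertices. *)

theory Defs
  imports Main
begin

text \<open>Induced subgraphs G - S are
  represented by the vertex set V - S with the same relation E (only edges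
  between remaining vertices are ever consulted).\<close>

definition simple_graph :: "'a set \<Rightarrow> ('a \<Rightarrow> 'a \<Rightarrow> bool) \<Rightarrow> bool" where
  "simple_graph V E \<longleftrightarrow> finite V \<and> (\<forall>x y. E x y \<longrightarrow> E y x)
     \<and> (\<forall>x. \<not> E x x) \<and> (\<forall>x y. E x y \<longrightarrow> x \<in> V \<and> y \<in> V)"

definition nbhd :: "'a set \<Rightarrow> ('a \<Rightarrow> 'a \<Rightarrow> bool) \<Rightarrow> 'a \<Rightarrow> 'a set" where
  "nbhd V E v = {u \<in> V. E v u}"

definition cnbhd :: "'a set \<Rightarrow> ('a \<Rightarrow> 'a \<Rightarrow> bool) \<Rightarrow> 'a \<Rightarrow> 'a set" where
  "cnbhd V E v = insert v (nbhd V E v)"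

definition degree :: "'a set \<Rightarrow> ('a \<Rightarrow> 'a \<Rightarrow> bool) \<Rightarrow> 'a \<Rightarrow> nat" where
  "degree V E v = card (nbhd V E v)"

definition leaf :: "'a set \<Rightarrow> ('a \<Rightarrow> 'a \<Rightarrow> bool) \<Rightarrow> 'a \<Rightarrow> bool" where
  "leaf V E v \<longleftrightarrow> v \<in> V \<and> degree V E v = 1"

definition dissociation_set :: "'a set \<Rightarrow> ('a \<Rightarrow> 'a \<Rightarrow> bool) \<Rightarrow> 'a set \<Rightarrow> bool" where
  "dissociation_set V E F \<longleftrightarrow> F \<subseteq> V \<and> (\<forall>x\<in>F. card {y \<in> F. E x y} \<le> 1)"

definition maximal_dissociation_set :: "'a set \<Rightarrow> ('a \<Rightarrow> 'a \<Rightarrow> bool) \<Rightarrow> 'a set \<Rightarrow> bool" where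
  "maximal_dissociation_set V E F \<longleftrightarrow> dissociation_set V E F \<and>
     \<not> (\<exists>F'. F \<subset> F' \<and> dissociation_set V E F')"

definition phi :: "'a set \<Rightarrow> ('a \<Rightarrow> 'a \<Rightarrow> bool) \<Rightarrow> nat" where
  "phi V E = card {F. maximal_dissociation_set V E F}"

end

theory Submission
  imports Defs
begin

text \<open>Every maximal dissociation set F either avoids w, and then contains both leaves
  v1, v2, or contains w, and then (by maximality, since v1 could otherwise be added) also
  exactly one neighbour u of w, so that F meets N[w] \<union> N[u] in {w, u}.  In each class the
  part of F inside the deleted set is fixed and has no edges to the remaining vertices, so
  deleting it maps the class injectively into the maximal dissociation sets of the smaller
  graph.  The class u = v1 yields G - N[w], because N[v1] \<subseteq> N[w].\<close>

lemma finite_maximal_dissociation_sets: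
  assumes "finite V"
  shows "finite {F. maximal_dissociation_set V E F}"
proof -
  have "{F. maximal_dissociation_set V E F} \<subseteq> Pow V"
    unfolding maximal_dissociation_set_def dissociation_set_def by auto
  then show ?thesis using assms finite_subset by blast
qed

lemma dissociation_set_neighbour_unique:
  assumes "finite V" "dissociation_set V E F" "x \<in> F" "a \<in> F" "b \<in> F" "E x a" "E x b"
  shows "a = b"
proof (rule ccontr)
  assume "a \<noteq> b"
  have "finite F" using assms(1,2) finite_subset unfolding dissociation_set_def by blast
  then have "card {a, b} \<le> card {y \<in> F. E x y}"
    by (intro card_mono) (use assms in auto)
  moreover have "card {y \<in> F. E x y} \<le> 1" using assms(2,3) unfolding dissociation_set_def by auto
  ultimately show False using \<open>a \<noteq> b\<close> by auto
qed

lemma maximal_dissociation_set_restrict: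
  assumes sg: "simple_graph V E" and max: "maximal_dissociation_set V E F"
    and no_edge: "\<And>x y. x \<in> V - K \<Longrightarrow> y \<in> F \<inter> K \<Longrightarrow> \<not> E x y"
  shows "maximal_dissociation_set (V - K) E (F - K)"
proof -
  have sym: "\<And>x y. E x y \<Longrightarrow> E y x" using sg unfolding simple_graph_def by auto
  have FV: "F \<subseteq> V" and deg: "\<And>x. x \<in> F \<Longrightarrow> card {y \<in> F. E x y} \<le> 1"
    using max unfolding maximal_dissociation_set_def dissociation_set_def by auto
  have finF: "finite F" using FV sg finite_subset unfolding simple_graph_def by blast
  have "dissociation_set (V - K) E (F - K)"
    unfolding dissociation_set_def
  proof (intro conjI ballI)
    show "F - K \<subseteq> V - K" using FV by blast
    fix x assume x: "x \<in> F - K"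
    have "card {y \<in> F - K. E x y} \<le> card {y \<in> F. E x y}"
      by (rule card_mono) (use finF in auto)
    then show "card {y \<in> F - K. E x y} \<le> 1" using deg[of x] x by auto
  qed
  moreover have "\<not> dissociation_set (V - K) E F'" if larger: "F - K \<subset> F'" for F'
  proof
    assume dF': "dissociation_set (V - K) E F'"
    have F'V: "F' \<subseteq> V - K" and degF': "\<And>x. x \<in> F' \<Longrightarrow> card {y \<in> F'. E x y} \<le> 1"
      using dF' unfolding dissociation_set_def by auto
    define F2 where "F2 = F' \<union> (F \<inter> K)"
    have "F \<subset> F2" using larger F'V unfolding F2_def by blast
    moreover have "dissociation_set V E F2"
      unfolding dissociation_set_def
    proof (intro conjI ballI)
      show "F2 \<subseteq> V" using F'V FV unfolding F2_def by blast
      fix x assume x: "x \<in> F2"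
      show "card {y \<in> F2. E x y} \<le> 1"
      proof (cases "x \<in> F'")
        case True
        then have "{y \<in> F2. E x y} = {y \<in> F'. E x y}" using no_edge F'V by (auto simp: F2_def)
        then show ?thesis using degF' True by auto
      next
        case False
        then have xFK: "x \<in> F \<inter> K" using x F2_def by auto
        have "{y \<in> F2. E x y} \<subseteq> {y \<in> F. E x y}"
          using no_edge[OF _ xFK] sym F'V unfolding F2_def by blast
        then have "card {y \<in> F2. E x y} \<le> card {y \<in> F. E x y}"
          by (rule card_mono[rotated]) (use finF in auto)
        then show ?thesis using deg[of x] xFK by auto
      qed
    qed
    ultimately show False using max unfolding maximal_dissociation_set_def by blast
  qed
  ultimately show ?thesis unfolding maximal_dissociation_set_def by blast
qed

lemma card_le_phi_restrict:
  assumes sg: "simple_graph V E"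
    and A: "A \<subseteq> {F. maximal_dissociation_set V E F}"
    and trace: "\<And>F. F \<in> A \<Longrightarrow> F \<inter> K = X"
    and no_edge: "\<And>x y. x \<in> V - K \<Longrightarrow> y \<in> X \<Longrightarrow> \<not> E x y"
  shows "card A \<le> phi (V - K) E"
proof -
  have "(\<lambda>F. F - K) ` A \<subseteq> {F. maximal_dissociation_set (V - K) E F}"
    using maximal_dissociation_set_restrict[OF sg] A trace no_edge by blast
  moreover have "inj_on (\<lambda>F. F - K) A"
  proof (rule inj_onI)
    fix F G assume "F \<in> A" "G \<in> A" "F - K = G - K"
    moreover have "F = (F - K) \<union> (F \<inter> K)" "G = (G - K) \<union> (G \<inter> K)" by auto
    ultimately show "F = G" using trace by metis
  qed
  moreover have "finite (V - K)" using sg unfolding simple_graph_def by auto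
  ultimately show ?thesis
    unfolding phi_def by (metis card_inj_on_le finite_maximal_dissociation_sets)
qed

lemma leaf_nbhd_eq:
  assumes "simple_graph V E" "leaf V E v" "E w v"
  shows "nbhd V E v = {w}"
proof -
  have "w \<in> nbhd V E v" using assms unfolding simple_graph_def nbhd_def by auto
  moreover have "card (nbhd V E v) = 1" using assms(2) unfolding leaf_def degree_def by auto
  ultimately show ?thesis by (metis card_1_singletonE singletonD)
qed

lemma adjacent_to_pendant:
  assumes "simple_graph V E" "nbhd V E v = {w}" "E x v"
  shows "x = w"
  using assms unfolding simple_graph_def nbhd_def by blast

lemma dissociation_set_insert_pendant:
  assumes sg: "simple_graph V E" and d: "dissociation_set V E F"
    and pendant: "nbhd V E v = {w}" and "v \<in> V"
    and free: "w \<notin> F \<or> (\<forall>y \<in> F. \<not> E w y)"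
  shows "dissociation_set V E (insert v F)"
  unfolding dissociation_set_def
proof (intro conjI ballI)
  have sym: "\<And>x y. E x y \<Longrightarrow> E y x" using sg unfolding simple_graph_def by auto
  note only_w = adjacent_to_pendant[OF sg pendant]
  show "insert v F \<subseteq> V" using d \<open>v \<in> V\<close> unfolding dissociation_set_def by auto
  fix x assume x: "x \<in> insert v F"
  have "card {y \<in> insert v F. E x y} \<le> card {w}" if "x = v"
    by (rule card_mono) (use that only_w sym in auto)
  moreover have "card {y \<in> insert v F. E x y} \<le> card {v}" if "x = w" "x \<noteq> v"
    by (rule card_mono) (use that x free in auto)
  moreover have "{y \<in> insert v F. E x y} = {y \<in> F. E x y}" "x \<in> F" if "x \<noteq> w" "x \<noteq> v"
    using that only_w x by auto
  ultimately show "card {y \<in> insert v F. E x y} \<le> 1"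
    using d unfolding dissociation_set_def by fastforce
qed

lemma maximal_dissociation_set_pendant_mem:
  assumes "simple_graph V E" "maximal_dissociation_set V E F"
    and "nbhd V E v = {w}" "v \<in> V"
    and "w \<notin> F \<or> (\<forall>y \<in> F. \<not> E w y)"
  shows "v \<in> F"
proof (rule ccontr)
  assume "v \<notin> F"
  then have "F \<subset> insert v F" by auto
  moreover have "dissociation_set V E (insert v F)"
    using dissociation_set_insert_pendant[OF assms(1) _ assms(3-5)] assms(2)
    unfolding maximal_dissociation_set_def by blast
  ultimately show False using assms(2) unfolding maximal_dissociation_set_def by blast
qed

lemma maximal_dissociation_set_support_has_neighbour:
  assumes sg: "simple_graph V E" and max: "maximal_dissociation_set V E F" and "w \<in> F"
    and pendant: "nbhd V E v = {w}" and "v \<in> V"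
  shows "\<exists>u \<in> nbhd V E w. u \<in> F"
proof (rule ccontr)
  assume none: "\<not> (\<exists>u \<in> nbhd V E w. u \<in> F)"
  have "F \<subseteq> V" using max unfolding maximal_dissociation_set_def dissociation_set_def by blast
  then have "\<forall>y \<in> F. \<not> E w y" using none unfolding nbhd_def by blast
  then have "v \<in> F" using maximal_dissociation_set_pendant_mem[OF sg max pendant \<open>v \<in> V\<close>] by blast
  moreover have "v \<in> nbhd V E w" using pendant sg \<open>v \<in> V\<close> unfolding simple_graph_def nbhd_def by auto
  ultimately show False using none by blast
qed

lemma dissociation_set_inter_cnbhd_edge:
  assumes sg: "simple_graph V E" and d: "dissociation_set V E F"
    and "w \<in> F" "u \<in> F" "E w u"
  shows "F \<inter> (cnbhd V E w \<union> cnbhd V E u) = {w, u}"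
proof -
  have fin: "finite V" and sym: "\<And>x y. E x y \<Longrightarrow> E y x"
    using sg unfolding simple_graph_def by auto
  note unique = dissociation_set_neighbour_unique[OF fin d]
  show ?thesis
    using assms unique[of w _ u] unique[of u _ w] sym unfolding cnbhd_def nbhd_def by blast
qed

lemma card_maximal_dissociation_sets_avoiding_le:
  assumes sg: "simple_graph V E"
    and "nbhd V E v1 = {w}" "v1 \<in> V" "nbhd V E v2 = {w}" "v2 \<in> V"
  shows "card {F. maximal_dissociation_set V E F \<and> w \<notin> F} \<le> phi (V - {w, v1, v2}) E"
proof (rule card_le_phi_restrict[OF sg, where X = "{v1, v2}"])
  fix F assume "F \<in> {F. maximal_dissociation_set V E F \<and> w \<notin> F}"
  then show "F \<inter> {w, v1, v2} = {v1, v2}"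
    using maximal_dissociation_set_pendant_mem[OF sg] assms by auto
next
  fix x y assume "x \<in> V - {w, v1, v2}" "y \<in> {v1, v2}"
  then show "\<not> E x y" using adjacent_to_pendant[OF sg] assms by blast
qed auto

lemma card_maximal_dissociation_sets_containing_edge_le:
  assumes sg: "simple_graph V E" and "E w u"
  shows "card {F. maximal_dissociation_set V E F \<and> w \<in> F \<and> u \<in> F}
    \<le> phi (V - (cnbhd V E w \<union> cnbhd V E u)) E"
proof (rule card_le_phi_restrict[OF sg, where X = "{w, u}"])
  fix F assume "F \<in> {F. maximal_dissociation_set V E F \<and> w \<in> F \<and> u \<in> F}"
  then show "F \<inter> (cnbhd V E w \<union> cnbhd V E u) = {w, u}"
    using dissociation_set_inter_cnbhd_edge[OF sg] assms(2)
    unfolding maximal_dissociation_set_def by blast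
next
  fix x y assume "x \<in> V - (cnbhd V E w \<union> cnbhd V E u)" "y \<in> {w, u}"
  then show "\<not> E x y" using sg unfolding simple_graph_def cnbhd_def nbhd_def by auto
qed auto

lemma card_le_card_plus_sum_cover:
  assumes "finite I" "finite B" "\<And>i. i \<in> I \<Longrightarrow> finite (A i)"
    and "M \<subseteq> B \<union> (\<Union>i \<in> I. A i)"
  shows "card M \<le> card B + (\<Sum>i \<in> I. card (A i))"
proof -
  have "card M \<le> card (B \<union> (\<Union>i \<in> I. A i))"
    using assms by (intro card_mono) auto
  also have "\<dots> \<le> card B + card (\<Union>i \<in> I. A i)" by (rule card_Un_le)
  also have "card (\<Union>i \<in> I. A i) \<le> (\<Sum>i \<in> I. card (A i))" by (rule card_UN_le[OF assms(1)])
  finally show ?thesis by simp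
qed

theorem lemma2p4:
  fixes V :: "'a set" and E :: "'a \<Rightarrow> 'a \<Rightarrow> bool" and w v1 v2 :: 'a
  assumes "simple_graph V E"
    and "w \<in> V"
    and "v1 \<noteq> v2"
    and "E w v1" and "E w v2"
    and "leaf V E v1" and "leaf V E v2"
  shows "phi V E \<le>
     (\<Sum>u \<in> nbhd V E w - {v1}. phi (V - (cnbhd V E w \<union> cnbhd V E u)) E)
     + phi (V - {w, v1, v2}) E + phi (V - cnbhd V E w) E"
proof -
  note sg = assms(1)
  let ?M = "{F. maximal_dissociation_set V E F}"
  let ?phi_edge = "\<lambda>u. phi (V - (cnbhd V E w \<union> cnbhd V E u)) E"
  have fin: "finite V" using sg unfolding simple_graph_def by auto
  then have fin_M: "finite ?M" by (rule finite_maximal_dissociation_sets)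
  have pendant: "nbhd V E v1 = {w}" "nbhd V E v2 = {w}"
    using leaf_nbhd_eq[OF sg] assms(4-7) by auto
  have in_V: "v1 \<in> V" "v2 \<in> V" using assms(6,7) unfolding leaf_def by auto
  have v1_nbhd: "v1 \<in> nbhd V E w" using assms(4) in_V unfolding nbhd_def by auto
  have "?M \<subseteq> {F \<in> ?M. w \<notin> F} \<union> (\<Union>u \<in> nbhd V E w. {F \<in> ?M. w \<in> F \<and> u \<in> F})"
    using maximal_dissociation_set_support_has_neighbour[OF sg _ _ pendant(1) in_V(1)] by blast
  then have "phi V E \<le> card {F \<in> ?M. w \<notin> F}
      + (\<Sum>u \<in> nbhd V E w. card {F \<in> ?M. w \<in> F \<and> u \<in> F})"
    unfolding phi_def using fin
    by (intro card_le_card_plus_sum_cover) (auto simp: nbhd_def intro: rev_finite_subset[OF fin_M])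
  also have "\<dots> \<le> phi (V - {w, v1, v2}) E + (\<Sum>u \<in> nbhd V E w. ?phi_edge u)"
    using card_maximal_dissociation_sets_avoiding_le[OF sg pendant(1) in_V(1) pendant(2) in_V(2)]
      card_maximal_dissociation_sets_containing_edge_le[OF sg]
    by (intro add_mono sum_mono) (auto simp: nbhd_def)
  also have "(\<Sum>u \<in> nbhd V E w. ?phi_edge u) = ?phi_edge v1 + (\<Sum>u \<in> nbhd V E w - {v1}. ?phi_edge u)"
    using fin v1_nbhd by (intro sum.remove) (auto simp: nbhd_def)
  also have "cnbhd V E w \<union> cnbhd V E v1 = cnbhd V E w"
    using pendant(1) v1_nbhd unfolding cnbhd_def by auto
  finally show ?thesis by simp
qed

end
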